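(* Let $A$ be a unital power-associative algebra over a field of characteristic zero, let $R$ be a Rota–Baxter operator of weight zero on $A$, and suppose $(R(1))^m=0$ for some $m\in\mathbb N$. Then (a) $R^{2m}=0$ if $A$ is associative or alternative; (b) $R^{3m-1}=0$ if $A$ is a Jordan algebra.
   Context: A linear operator $R$ on $A$ is a Rota–Baxter operator of weight $0$ if $R(x)R(y)=R(R(x)y+xR(y))$ for all $x,y\in A$. Power-associative: every element generates an associative subalgebra. *)

theory Defs
  imports Complex_Main
begin

definition nonassoc_algebra :: "('k::field \<Rightarrow> 'a::ab_group_add \<Rightarrow> 'a) \<Rightarrow> ('a \<Rightarrow> 'a \<Rightarrow> 'a) \<Rightarrow> bool" where
  "nonassoc_algebra scale mul \<longleftrightarrow> Vector_Spaces.vector_space scale \<and>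
     (\<forall>x y z. mul (x + y) z = mul x z + mul y z) \<and>
     (\<forall>x y z. mul x (y + z) = mul x y + mul x z) \<and>
     (\<forall>c x y. mul (scale c x) y = scale c (mul x y)) \<and>
     (\<forall>c x y. mul x (scale c y) = scale c (mul x y))"

definition unital :: "('a \<Rightarrow> 'a \<Rightarrow> 'a) \<Rightarrow> 'a \<Rightarrow> bool" where
  "unital mul e \<longleftrightarrow> (\<forall>x. mul e x = x \<and> mul x e = x)"

inductive_set gen_subalg :: "('k \<Rightarrow> 'a::ab_group_add \<Rightarrow> 'a) \<Rightarrow> ('a \<Rightarrow> 'a \<Rightarrow> 'a) \<Rightarrow> 'a \<Rightarrow> 'a set"
  for scale mul x where
  gen: "x \<in> gen_subalg scale mul x"
| zero: "0 \<in> gen_subalg scale mul x"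
| add: "u \<in> gen_subalg scale mul x \<Longrightarrow> v \<in> gen_subalg scale mul x \<Longrightarrow> u + v \<in> gen_subalg scale mul x"
| smul: "u \<in> gen_subalg scale mul x \<Longrightarrow> scale c u \<in> gen_subalg scale mul x"
| mult: "u \<in> gen_subalg scale mul x \<Longrightarrow> v \<in> gen_subalg scale mul x \<Longrightarrow> mul u v \<in> gen_subalg scale mul x"

definition power_assoc :: "('k \<Rightarrow> 'a::ab_group_add \<Rightarrow> 'a) \<Rightarrow> ('a \<Rightarrow> 'a \<Rightarrow> 'a) \<Rightarrow> bool" where
  "power_assoc scale mul \<longleftrightarrow> (\<forall>x. \<forall>u\<in>gen_subalg scale mul x. \<forall>v\<in>gen_subalg scale mul x.
      \<forall>w\<in>gen_subalg scale mul x. mul (mul u v) w = mul u (mul v w))"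

definition associative_alg :: "('a \<Rightarrow> 'a \<Rightarrow> 'a) \<Rightarrow> bool" where
  "associative_alg mul \<longleftrightarrow> (\<forall>x y z. mul (mul x y) z = mul x (mul y z))"

definition alternative_alg :: "('a \<Rightarrow> 'a \<Rightarrow> 'a) \<Rightarrow> bool" where
  "alternative_alg mul \<longleftrightarrow> (\<forall>x y. mul x (mul x y) = mul (mul x x) y \<and> mul (mul y x) x = mul y (mul x x))"

definition jordan_alg :: "('a \<Rightarrow> 'a \<Rightarrow> 'a) \<Rightarrow> bool" where
  "jordan_alg mul \<longleftrightarrow> (\<forall>x y. mul x y = mul y x) \<and>
     (\<forall>x y. mul (mul x y) (mul x x) = mul x (mul y (mul x x)))"

primrec npow :: "('a \<Rightarrow> 'a \<Rightarrow> 'a) \<Rightarrow> 'a \<Rightarrow> 'a \<Rightarrow> nat \<Rightarrow> 'a" where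
  "npow mul e a 0 = e"
| "npow mul e a (Suc n) = mul (npow mul e a n) a"

definition rota_baxter0 :: "('k::field \<Rightarrow> 'a::ab_group_add \<Rightarrow> 'a) \<Rightarrow> ('a \<Rightarrow> 'a \<Rightarrow> 'a) \<Rightarrow> ('a \<Rightarrow> 'a) \<Rightarrow> bool" where
  "rota_baxter0 scale mul R \<longleftrightarrow> Vector_Spaces.linear scale scale R \<and>
     (\<forall>x y. mul (R x) (R y) = R (mul (R x) y + mul x (R y)))"

end

theory Submission
  imports Defs
begin

text \<open>
Put \<open>b n = R\<^sup>n(1)\<close>. The Rota--Baxter identity for \<open>R(b n) R(1)\<close> gives
\<open>b n \<cdot> R(1) = (n+1) b (n+1)\<close>, so \<open>R(1)\<^sup>n = n! b n\<close>, and in characteristic zero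
\<open>R(1)\<^sup>m = 0\<close> forces \<open>b m = 0\<close>. For \<open>R(x) R(b k)\<close> it gives
\<open>R(R(x) \<cdot> b k) = R(x) \<cdot> b (k+1) - R(x \<cdot> b (k+1))\<close>: one \<open>R\<close> can be moved from each side
of a product onto the unit factor. Starting from \<open>R\<^sup>2\<^sup>m(x) = R\<^sup>m(R\<^sup>m(x) \<cdot> b 0)\<close> and doing this
\<open>m\<close> times leaves only terms containing \<open>b m = 0\<close>. No associativity is used, so
\<open>R\<^sup>2\<^sup>m = 0\<close> in every unital algebra, and the Jordan bound follows from \<open>3m - 1 \<ge> 2m\<close>
for \<open>m \<ge> 1\<close>.
\<close>

lemma linear_funpow:
  assumes "Vector_Spaces.vector_space scale" and "Vector_Spaces.linear scale scale R"
  shows "Vector_Spaces.linear scale scale (R ^^ n)"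
proof (induction n)
  case 0
  show ?case using vector_space.linear_id[OF assms(1)] by (simp add: id_def)
next
  case (Suc n)
  then show ?case using Vector_Spaces.linear_compose[OF Suc assms(2)] by (simp only: funpow.simps(2))
qed

lemma nonassoc_algebra_mul_zero:
  assumes "nonassoc_algebra scale mul"
  shows "mul x 0 = 0" and "mul 0 x = 0"
proof -
  have "mul x (0 + 0) = mul x 0 + mul x 0" "mul (0 + 0) x = mul 0 x + mul 0 x"
    using assms unfolding nonassoc_algebra_def by blast+
  then show "mul x 0 = 0" and "mul 0 x = 0" by simp_all
qed

lemma rota_baxter0_mul_iterate_unit:
  assumes alg: "nonassoc_algebra scale mul" and un: "unital mul e"
    and rb: "rota_baxter0 scale mul R"
  shows "mul ((R ^^ n) e) (R e) = scale (of_nat (Suc n)) ((R ^^ Suc n) e)"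
proof -
  interpret V: Vector_Spaces.vector_space scale
    using alg unfolding nonassoc_algebra_def by blast
  interpret L: Vector_Spaces.linear scale scale R
    using rb unfolding rota_baxter0_def by blast
  show ?thesis
  proof (induction n)
    case 0
    show ?case using un unfolding unital_def by simp
  next
    case (Suc n)
    let ?b = "\<lambda>n. (R ^^ n) e"
    have "mul (?b (Suc n)) (R e) = R (mul (R (?b n)) e + mul (?b n) (R e))"
      using rb unfolding rota_baxter0_def by simp
    also have "\<dots> = R (?b (Suc n) + scale (of_nat (Suc n)) (?b (Suc n)))"
      using Suc un unfolding unital_def by simp
    also have "?b (Suc n) + scale (of_nat (Suc n)) (?b (Suc n)) = scale (of_nat (Suc (Suc n))) (?b (Suc n))"
      by (metis V.scale_left_distrib V.scale_one of_nat_Suc add.commute)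
    finally show ?case by (simp add: L.scale)
  qed
qed

lemma npow_rota_baxter0_unit:
  assumes alg: "nonassoc_algebra scale mul" and "unital mul e"
    and "rota_baxter0 scale mul R"
  shows "npow mul e (R e) n = scale (fact n) ((R ^^ n) e)"
proof -
  interpret V: Vector_Spaces.vector_space scale
    using alg unfolding nonassoc_algebra_def by blast
  show ?thesis
  proof (induction n)
    case 0
    show ?case by simp
  next
    case (Suc n)
    have "npow mul e (R e) (Suc n) = scale (fact n) (mul ((R ^^ n) e) (R e))"
      using Suc alg unfolding nonassoc_algebra_def by simp
    also have "\<dots> = scale (fact (Suc n)) ((R ^^ Suc n) e)"
      using rota_baxter0_mul_iterate_unit[OF assms] by (simp add: algebra_simps)
    finally show ?case .
  qed
qed

lemma rota_baxter0_iterate_unit_eq_zero: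
  fixes scale :: "'k::field_char_0 \<Rightarrow> 'a::ab_group_add \<Rightarrow> 'a"
  assumes alg: "nonassoc_algebra scale mul" and un: "unital mul e"
    and rb: "rota_baxter0 scale mul R" and nil: "npow mul e (R e) m = 0"
  shows "(R ^^ m) e = 0"
proof -
  interpret V: Vector_Spaces.vector_space scale
    using alg unfolding nonassoc_algebra_def by blast
  have "scale (fact m) ((R ^^ m) e) = 0"
    using npow_rota_baxter0_unit[OF alg un rb] nil by simp
  then show ?thesis by simp
qed

lemma rota_baxter0_shift_to_unit:
  assumes "rota_baxter0 scale mul R"
  shows "R (mul (R x) ((R ^^ k) e)) = mul (R x) ((R ^^ Suc k) e) - R (mul x ((R ^^ Suc k) e))"
proof -
  interpret L: Vector_Spaces.linear scale scale R
    using assms unfolding rota_baxter0_def by blast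
  have "mul (R x) (R ((R ^^ k) e)) = R (mul (R x) ((R ^^ k) e)) + R (mul x (R ((R ^^ k) e)))"
    using assms unfolding rota_baxter0_def by (simp add: L.add)
  then show ?thesis by simp
qed

lemma rota_baxter0_vanishing:
  assumes alg: "nonassoc_algebra scale mul" and rb: "rota_baxter0 scale mul R"
    and unit_zero: "(R ^^ m) e = 0"
  shows "d \<le> m \<Longrightarrow> d \<le> s \<Longrightarrow> d \<le> t \<Longrightarrow> (R ^^ s) (mul ((R ^^ t) x) ((R ^^ (m - d)) e)) = 0"
proof (induction d arbitrary: s t)
  case 0
  interpret L: Vector_Spaces.linear scale scale "R ^^ s"
    using linear_funpow alg rb unfolding nonassoc_algebra_def rota_baxter0_def by blast
  show ?case using unit_zero nonassoc_algebra_mul_zero[OF alg] by simp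
next
  case (Suc d)
  obtain s' t' where s: "s = Suc s'" and t: "t = Suc t'"
    using Suc.prems by (metis Suc_le_D)
  interpret L: Vector_Spaces.linear scale scale "R ^^ s'"
    using linear_funpow alg rb unfolding nonassoc_algebra_def rota_baxter0_def by blast
  have k: "m - d = Suc (m - Suc d)" using Suc.prems by simp
  let ?y = "(R ^^ t') x" and ?b = "(R ^^ (m - d)) e"
  have ft: "(R ^^ t) x = R ?y" by (simp add: t)
  have fs: "(R ^^ s) z = (R ^^ s') (R z)" for z by (simp add: s funpow_swap1)
  have "(R ^^ s) (mul ((R ^^ t) x) ((R ^^ (m - Suc d)) e))
      = (R ^^ s') (R (mul (R ?y) ((R ^^ (m - Suc d)) e)))"
    by (simp only: ft fs)
  also have "\<dots> = (R ^^ s') (mul (R ?y) ?b - R (mul ?y ?b))"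
    unfolding k by (simp only: rota_baxter0_shift_to_unit[OF rb])
  also have "\<dots> = (R ^^ s') (mul ((R ^^ t) x) ?b) - (R ^^ s) (mul ?y ?b)"
    by (simp only: L.diff ft fs)
  also have "\<dots> = 0"
    using Suc.IH[of s' t] Suc.IH[of s t'] Suc.prems s t by simp
  finally show ?case .
qed

lemma rota_baxter0_nilpotent:
  fixes scale :: "'k::field_char_0 \<Rightarrow> 'a::ab_group_add \<Rightarrow> 'a"
  assumes alg: "nonassoc_algebra scale mul" and un: "unital mul e"
    and rb: "rota_baxter0 scale mul R" and nil: "npow mul e (R e) m = 0"
  shows "R ^^ (2 * m) = (\<lambda>_. 0)"
proof
  fix x
  have "(R ^^ (2 * m)) x = (R ^^ m) (mul ((R ^^ m) x) ((R ^^ (m - m)) e))"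
    using un unfolding unital_def by (simp add: mult_2 funpow_add)
  also have "\<dots> = 0"
    using rota_baxter0_vanishing[OF alg rb rota_baxter0_iterate_unit_eq_zero[OF assms],
        where d = m and s = m and t = m] by simp
  finally show "(R ^^ (2 * m)) x = 0" .
qed

lemma funpow_eq_zero_mono:
  fixes f :: "'a::zero \<Rightarrow> 'a"
  assumes "f ^^ n = (\<lambda>_. 0)" and "f 0 = 0" and "n \<le> k"
  shows "f ^^ k = (\<lambda>_. 0)"
proof -
  have "(f ^^ j) 0 = 0" for j by (induction j) (simp_all add: assms(2))
  moreover have "f ^^ k = f ^^ (k - n) \<circ> f ^^ n"
    using assms(3) by (simp flip: funpow_add)
  ultimately show ?thesis using assms(1) by auto
qed

theorem lemma11:
  fixes scale :: "'k::field_char_0 \<Rightarrow> 'a::ab_group_add \<Rightarrow> 'a"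
    and mul :: "'a \<Rightarrow> 'a \<Rightarrow> 'a" and e :: 'a and R :: "'a \<Rightarrow> 'a" and m :: nat
  assumes "nonassoc_algebra scale mul"
    and "unital mul e"
    and "power_assoc scale mul"
    and "rota_baxter0 scale mul R"
    and "npow mul e (R e) m = 0"
  shows "((associative_alg mul \<or> alternative_alg mul) \<longrightarrow> R ^^ (2 * m) = (\<lambda>_. 0))
       \<and> (jordan_alg mul \<longrightarrow> R ^^ (3 * m - 1) = (\<lambda>_. 0))"
proof -
  have nilpotent: "R ^^ (2 * m) = (\<lambda>_. 0)"
    using rota_baxter0_nilpotent[OF assms(1,2,4,5)] .
  interpret L: Vector_Spaces.linear scale scale R
    using assms(4) unfolding rota_baxter0_def by blast
  have "R 0 = 0" by (rule L.zero)
  then have "R ^^ (3 * m - 1) = (\<lambda>_. 0)"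
    using nilpotent funpow_eq_zero_mono[where f = R and n = "2 * m" and k = "3 * m - 1"]
    by (cases "m = 0") simp_all
  with nilpotent show ?thesis by blast
qed

end
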